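(* Let $w=t_x\overline w\in\widehat W$ with $x\in L$, $\overline w\in W_0$. Then $\mathcal{L}_{\Lambda_0}(w)=\frac h2|x|^2-\mathrm{ht}(x)$; in particular $\mathcal{L}_{\Lambda_0}(w)=\mathcal{L}_{\Lambda_0}(t_x)$. Moreover, writing $w=\sigma_jv$ with $\sigma_j\in\Sigma$ and $v\in W$, one has $\mathcal{L}_{\Lambda_0}(\sigma_jv)=\mathcal{L}_{\Lambda_0}(\sigma_jv^0)$, where $v^0$ is the unique element of minimal length in $vW_0$.
   Context: Affine Kac–Moody setting: generalized Cartan matrix $A=(a_{ij})_{0\le i,j\le n}$ of affine type, realization $\Delta=\{\alpha_0,\dots,\alpha_n\}\subset\mathfrak h^*$, $\Delta^\vee\subset\mathfrak h$; $(a_i)$, $(a_i^\vee)$ primitive kernel vectors of $A$, $A^T$; $h=\sum a_i$, $\delta=\sum a_i\alpha_i$, $c=\sum a_i^\vee\alpha_i^\vee$, $\theta=\delta-a_0\alpha_0=\sum_{i\ge1}a_i\alpha_i$. $V_0=\bigoplus_{i\ge1}\mathbb{R}\alpha_i$ with the standard invariant form $(\cdot|\cdot)$. For $x\in V_0$, $t_x(v)=v+\langle v,c\rangle x-((v|x)+\frac12|x|^2\langle v,c\rangle)\delta$. $W_0=\langle s_1,\dots,s_n\rangle$, $M=\mathbb{Z}W_0(\theta/a_0)$, $W=\langle s_0,\dots,s_n\rangle=T(M)\rtimes W_0$. $L\subset V_0$ is the image of the coweight lattice $P_0^\vee=\bigoplus\mathbb{Z}\omega_i^\vee$ of $W_0$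 under the isomorphism $V_0^*\cong V_0$ induced by $(\cdot|\cdot)$; $M\subset L$; the extended affine Weyl group is $\widehat W=T(L)\rtimes W_0$. With $J=\{j\in\{1,\dots,n\}\mid a_j=1\}$, $\sigma_j=t_{\omega_j^\vee}w_{0,j}w_0$ for $j\in J$ ($w_0$ longest element of $W_0$, $w_{0,j}$ longest element of the parabolic subgroup generated by $s_i$, $i\ne j$, $1\le i\le n$), $\Sigma=\{e\}\cup\{\sigma_j\mid j\in J\}$, and every element of $\widehat W$ is uniquely $\sigma v$ with $\sigma\in\Sigma$, $v\in W$. $\rho^\vee\in\mathfrak h$ with $\langle\alpha_i,\rho^\vee\rangle=1$ for all $i$; $\mathcal{L}_{\Lambda_0}(g)=\langle\Lambda_0-g\Lambda_0,\rho^\vee\rangle$ for $g\in GL(\mathfrak h^* )$; $\mathrm{ht}(\sum x_i\alpha_i)=\sum x_i$ (rational coefficients allowed). *)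

theory Defs
  imports "HOL-Analysis.Analysis"
begin

text \<open>Matrices are indexed by 0..n (entries outside are irrelevant).\<close>

definition gcm :: "nat \<Rightarrow> (nat \<Rightarrow> nat \<Rightarrow> int) \<Rightarrow> bool" where
  "gcm n A \<longleftrightarrow> (\<forall>i\<le>n. A i i = 2) \<and> (\<forall>i\<le>n. \<forall>j\<le>n. i \<noteq> j \<longrightarrow> A i j \<le> 0)
     \<and> (\<forall>i\<le>n. \<forall>j\<le>n. A i j = 0 \<longleftrightarrow> A j i = 0)"

definition indecomposable :: "nat \<Rightarrow> (nat \<Rightarrow> nat \<Rightarrow> int) \<Rightarrow> bool" where
  "indecomposable n A \<longleftrightarrow> \<not> (\<exists>I. I \<subseteq> {0..n} \<and> I \<noteq> {} \<and> I \<noteq> {0..n} \<and>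
       (\<forall>i\<in>I. \<forall>j\<in>{0..n} - I. A i j = 0 \<and> A j i = 0))"

definition mat_vec :: "nat \<Rightarrow> (nat \<Rightarrow> nat \<Rightarrow> int) \<Rightarrow> (nat \<Rightarrow> real) \<Rightarrow> nat \<Rightarrow> real" where
  "mat_vec n A v i = (\<Sum>j\<le>n. of_int (A i j) * v j)"

definition affine_type :: "nat \<Rightarrow> (nat \<Rightarrow> nat \<Rightarrow> int) \<Rightarrow> bool" where
  "affine_type n A \<longleftrightarrow> gcm n A \<and> indecomposable n A
     \<and> (\<exists>u. (\<exists>i\<le>n. u i \<noteq> 0) \<and> (\<forall>i\<le>n. mat_vec n A u i = 0) \<and>
            (\<forall>v. (\<forall>i\<le>n. mat_vec n A v i = 0) \<longrightarrow> (\<exists>t. \<forall>i\<le>n. v i = t * u i)))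
     \<and> (\<exists>u. (\<forall>i\<le>n. u i > 0) \<and> (\<forall>i\<le>n. mat_vec n A u i = 0))
     \<and> (\<forall>v. (\<forall>i\<le>n. mat_vec n A v i \<ge> 0) \<longrightarrow> (\<forall>i\<le>n. mat_vec n A v i = 0))"

definition prim_kernel_vec :: "nat \<Rightarrow> (nat \<Rightarrow> nat \<Rightarrow> int) \<Rightarrow> (nat \<Rightarrow> int) \<Rightarrow> bool" where
  "prim_kernel_vec n A a \<longleftrightarrow> (\<forall>i\<le>n. a i > 0) \<and> (\<forall>i\<le>n. (\<Sum>j\<le>n. A i j * a j) = 0)
     \<and> (\<forall>d. (\<forall>i\<le>n. d dvd a i) \<longrightarrow> is_unit d)"

text \<open>h* is a real vector space 'v (of dimension n+2 = 2(n+1) - rank A); h is its dual,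
  represented by linear functionals 'v \<Rightarrow> real; the pairing is evaluation.
  Convention: \<langle>alpha_i^vee, alpha_j\<rangle> = a_ij.\<close>
definition realization :: "nat \<Rightarrow> (nat \<Rightarrow> nat \<Rightarrow> int) \<Rightarrow> (nat \<Rightarrow> 'v::euclidean_space) \<Rightarrow> (nat \<Rightarrow> 'v \<Rightarrow> real) \<Rightarrow> bool" where
  "realization n A \<alpha> \<alpha>v \<longleftrightarrow> DIM('v) = n + 2 \<and> inj_on \<alpha> {0..n} \<and> independent (\<alpha> ` {0..n})
     \<and> (\<forall>i\<le>n. linear (\<alpha>v i))
     \<and> (\<forall>c. (\<forall>lam. (\<Sum>i\<le>n. c i * \<alpha>v i lam) = 0) \<longrightarrow> (\<forall>i\<le>n. c i = 0))
     \<and> (\<forall>i\<le>n. \<forall>j\<le>n. \<alpha>v i (\<alpha> j) = of_int (A i j))"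

definition std_inv_form :: "nat \<Rightarrow> (nat \<Rightarrow> 'v::euclidean_space) \<Rightarrow> (nat \<Rightarrow> 'v \<Rightarrow> real) \<Rightarrow> (nat \<Rightarrow> int) \<Rightarrow> (nat \<Rightarrow> int) \<Rightarrow> ('v \<Rightarrow> 'v \<Rightarrow> real) \<Rightarrow> bool" where
  "std_inv_form n \<alpha> \<alpha>v a av B \<longleftrightarrow> bilinear B \<and> (\<forall>x y. B x y = B y x)
     \<and> (\<forall>x. (\<forall>y. B x y = 0) \<longrightarrow> x = 0)
     \<and> (\<forall>lam. \<forall>i\<le>n. B lam (\<alpha> i) = (of_int (av i) / of_int (a i)) * \<alpha>v i lam)"

definition srefl :: "(nat \<Rightarrow> 'v::real_vector) \<Rightarrow> (nat \<Rightarrow> 'v \<Rightarrow> real) \<Rightarrow> nat \<Rightarrow> 'v \<Rightarrow> 'v" where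
  "srefl \<alpha> \<alpha>v i lam = lam - \<alpha>v i lam *\<^sub>R \<alpha> i"

definition wprod :: "(nat \<Rightarrow> 'v::real_vector) \<Rightarrow> (nat \<Rightarrow> 'v \<Rightarrow> real) \<Rightarrow> nat list \<Rightarrow> 'v \<Rightarrow> 'v" where
  "wprod \<alpha> \<alpha>v ws = foldr (\<lambda>i f. srefl \<alpha> \<alpha>v i \<circ> f) ws id"

text \<open>Group generated by the simple reflections s_i, i \<in> S (the reflections are involutions,
  so the generated monoid is the generated group).\<close>
definition gen_grp :: "(nat \<Rightarrow> 'v::real_vector) \<Rightarrow> (nat \<Rightarrow> 'v \<Rightarrow> real) \<Rightarrow> nat set \<Rightarrow> ('v \<Rightarrow> 'v) set" where
  "gen_grp \<alpha> \<alpha>v S = {wprod \<alpha> \<alpha>v ws | ws. set ws \<subseteq> S}"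

definition wlen :: "(nat \<Rightarrow> 'v::real_vector) \<Rightarrow> (nat \<Rightarrow> 'v \<Rightarrow> real) \<Rightarrow> nat set \<Rightarrow> ('v \<Rightarrow> 'v) \<Rightarrow> nat" where
  "wlen \<alpha> \<alpha>v S g = (LEAST k. \<exists>ws. set ws \<subseteq> S \<and> length ws = k \<and> wprod \<alpha> \<alpha>v ws = g)"

definition longest :: "(nat \<Rightarrow> 'v::real_vector) \<Rightarrow> (nat \<Rightarrow> 'v \<Rightarrow> real) \<Rightarrow> nat set \<Rightarrow> 'v \<Rightarrow> 'v" where
  "longest \<alpha> \<alpha>v S = (THE g. g \<in> gen_grp \<alpha> \<alpha>v S \<and>
       (\<forall>g'\<in>gen_grp \<alpha> \<alpha>v S. wlen \<alpha> \<alpha>v S g' \<le> wlen \<alpha> \<alpha>v S g))"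

definition delta :: "nat \<Rightarrow> (nat \<Rightarrow> int) \<Rightarrow> (nat \<Rightarrow> 'v::real_vector) \<Rightarrow> 'v" where
  "delta n a \<alpha> = (\<Sum>i\<le>n. of_int (a i) *\<^sub>R \<alpha> i)"

text \<open>The canonical central element c = sum a_i^vee alpha_i^vee, as a functional on h*.\<close>
definition cfun :: "nat \<Rightarrow> (nat \<Rightarrow> int) \<Rightarrow> (nat \<Rightarrow> 'v \<Rightarrow> real) \<Rightarrow> 'v \<Rightarrow> real" where
  "cfun n av \<alpha>v lam = (\<Sum>i\<le>n. of_int (av i) * \<alpha>v i lam)"

definition coxnum :: "nat \<Rightarrow> (nat \<Rightarrow> int) \<Rightarrow> int" where
  "coxnum n a = (\<Sum>i\<le>n. a i)"

definition transl :: "nat \<Rightarrow> (nat \<Rightarrow> int) \<Rightarrow> (nat \<Rightarrow> int) \<Rightarrow> (nat \<Rightarrow> 'v::real_vector) \<Rightarrow> (nat \<Rightarrow> 'v \<Rightarrow> real)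
     \<Rightarrow> ('v \<Rightarrow> 'v \<Rightarrow> real) \<Rightarrow> 'v \<Rightarrow> 'v \<Rightarrow> 'v" where
  "transl n a av \<alpha> \<alpha>v B x v = v + cfun n av \<alpha>v v *\<^sub>R x
      - (B v x + 1/2 * B x x * cfun n av \<alpha>v v) *\<^sub>R delta n a \<alpha>"

text \<open>Image in V_0 = span{alpha_1..alpha_n} of the fundamental coweight omega_j^vee under
  V_0^* \<cong> V_0 induced by the form: the y \<in> V_0 with (alpha_k | y) = delta_jk.\<close>
definition omv :: "nat \<Rightarrow> (nat \<Rightarrow> 'v::real_vector) \<Rightarrow> ('v \<Rightarrow> 'v \<Rightarrow> real) \<Rightarrow> nat \<Rightarrow> 'v" where
  "omv n \<alpha> B j = (THE y. y \<in> span (\<alpha> ` {1..n}) \<and>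
       (\<forall>k\<in>{1..n}. B (\<alpha> k) y = (if k = j then 1 else 0)))"

definition coweight_lattice :: "nat \<Rightarrow> (nat \<Rightarrow> 'v::real_vector) \<Rightarrow> ('v \<Rightarrow> 'v \<Rightarrow> real) \<Rightarrow> 'v set" where
  "coweight_lattice n \<alpha> B = {\<Sum>j\<in>{1..n}. of_int (m j) *\<^sub>R omv n \<alpha> B j | m. True}"

definition ht :: "nat \<Rightarrow> (nat \<Rightarrow> 'v::real_vector) \<Rightarrow> 'v \<Rightarrow> real" where
  "ht n \<alpha> x = (THE s. \<exists>c. x = (\<Sum>i\<in>{1..n}. c i *\<^sub>R \<alpha> i) \<and> s = (\<Sum>i\<in>{1..n}. c i))"

definition sigma_j :: "nat \<Rightarrow> (nat \<Rightarrow> int) \<Rightarrow> (nat \<Rightarrow> int) \<Rightarrow> (nat \<Rightarrow> 'v::real_vector) \<Rightarrow> (nat \<Rightarrow> 'v \<Rightarrow> real)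
     \<Rightarrow> ('v \<Rightarrow> 'v \<Rightarrow> real) \<Rightarrow> nat \<Rightarrow> 'v \<Rightarrow> 'v" where
  "sigma_j n a av \<alpha> \<alpha>v B j = transl n a av \<alpha> \<alpha>v B (omv n \<alpha> B j)
       \<circ> longest \<alpha> \<alpha>v ({1..n} - {j}) \<circ> longest \<alpha> \<alpha>v {1..n}"

definition Sigma_set :: "nat \<Rightarrow> (nat \<Rightarrow> int) \<Rightarrow> (nat \<Rightarrow> int) \<Rightarrow> (nat \<Rightarrow> 'v::real_vector) \<Rightarrow> (nat \<Rightarrow> 'v \<Rightarrow> real)
     \<Rightarrow> ('v \<Rightarrow> 'v \<Rightarrow> real) \<Rightarrow> ('v \<Rightarrow> 'v) set" where
  "Sigma_set n a av \<alpha> \<alpha>v B = {id} \<union> {sigma_j n a av \<alpha> \<alpha>v B j | j. j \<in> {1..n} \<and> a j = 1}"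

definition LL0 :: "'v::real_vector \<Rightarrow> ('v \<Rightarrow> real) \<Rightarrow> ('v \<Rightarrow> 'v) \<Rightarrow> real" where
  "LL0 \<Lambda>0 \<rho>v g = \<rho>v (\<Lambda>0 - g \<Lambda>0)"

end

theory Submission
  imports Defs
begin

text \<open>The finite Weyl group W_0 fixes \<Lambda>_0, since \<langle>\<Lambda>_0, \<alpha>_i^\<or>\<rangle> = 0 for i \<ge> 1. Hence
  L(g u) = L(g) for all u in W_0, which yields both the independence of the finite part of w and
  the statement about v^0 in v W_0. As \<Lambda>_0 has level 1 and
  is orthogonal to V_0, t_x \<Lambda>_0 = \<Lambda>_0 + x - |x|^2/2 \<delta>, and \<rho>^\<or> takes the value ht(x) on x and
  h on \<delta>. The one substantial input is x \<in> V_0: the fundamental coweights exist in V_0 because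
  the form is nondegenerate there, i.e. the Cartan submatrix (a_ij), i, j \<ge> 1, of an affine
  matrix is nonsingular.\<close>

lemma span_image_sumE:
  fixes \<alpha> :: "'i \<Rightarrow> 'v::real_vector"
  assumes "finite I" "inj_on \<alpha> I" "y \<in> span (\<alpha> ` I)"
  obtains c where "y = (\<Sum>i\<in>I. c i *\<^sub>R \<alpha> i)"
proof -
  have "y \<in> range (\<lambda>u. \<Sum>v\<in>\<alpha> ` I. u v *\<^sub>R v)"
    using assms(1,3) span_finite[of "\<alpha> ` I"] by simp
  then obtain u where "y = (\<Sum>v\<in>\<alpha> ` I. u v *\<^sub>R v)" by blast
  then have "y = (\<Sum>i\<in>I. u (\<alpha> i) *\<^sub>R \<alpha> i)"
    using sum.reindex[OF assms(2), of "\<lambda>v. u v *\<^sub>R v"] by simp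
  then show ?thesis by (rule that)
qed

lemma independent_image_sum_eq_0:
  fixes \<alpha> :: "'i \<Rightarrow> 'v::real_vector"
  assumes "independent (\<alpha> ` I)" "inj_on \<alpha> I" "finite I"
    and "(\<Sum>i\<in>I. c i *\<^sub>R \<alpha> i) = 0" "i \<in> I"
  shows "c i = 0"
proof -
  define u where "u v = c (inv_into I \<alpha> v)" for v
  have "(\<Sum>v\<in>\<alpha> ` I. u v *\<^sub>R v) = (\<Sum>i\<in>I. u (\<alpha> i) *\<^sub>R \<alpha> i)"
    by (rule sum.reindex[OF assms(2), unfolded comp_def])
  also have "\<dots> = (\<Sum>i\<in>I. c i *\<^sub>R \<alpha> i)"
    by (rule sum.cong) (simp_all add: u_def inv_into_f_f[OF assms(2)])
  finally have "(\<Sum>v\<in>\<alpha> ` I. u v *\<^sub>R v) = 0"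
    using assms(4) by simp
  then have "u (\<alpha> i) = 0"
    using independentD[OF assms(1) finite_imageI[OF assms(3)] subset_refl] assms(5) by blast
  then show ?thesis
    using assms(5) by (simp add: u_def inv_into_f_f[OF assms(2)])
qed

lemma dual_vector_exists_unique:
  fixes \<alpha> :: "'i \<Rightarrow> 'v::euclidean_space" and B :: "'v \<Rightarrow> 'v \<Rightarrow> real"
  assumes fin: "finite I" and inj: "inj_on \<alpha> I" and ind: "independent (\<alpha> ` I)"
    and lin: "\<And>u. linear (B u)"
    and nondeg: "\<And>y. y \<in> span (\<alpha> ` I) \<Longrightarrow> \<forall>k\<in>I. B (\<alpha> k) y = 0 \<Longrightarrow> y = 0"
    and j: "j \<in> I"
  shows "\<exists>!y. y \<in> span (\<alpha> ` I) \<and> (\<forall>k\<in>I. B (\<alpha> k) y = (if k = j then 1 else 0))"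
proof -
  let ?V = "span (\<alpha> ` I)"
  define g where "g y = (\<Sum>k\<in>I. B (\<alpha> k) y *\<^sub>R \<alpha> k)" for y
  have lg: "linear g"
    by (rule linearI) (simp_all add: g_def linear_add[OF lin] linear_scale[OF lin]
        scaleR_add_left sum.distrib scaleR_sum_right)
  have g_coeffs: "B (\<alpha> k) y = c k"
    if "g y = (\<Sum>k\<in>I. c k *\<^sub>R \<alpha> k)" "k \<in> I" for y c k
  proof -
    have "(\<Sum>k\<in>I. (B (\<alpha> k) y - c k) *\<^sub>R \<alpha> k) = 0"
      using that(1) by (simp add: g_def scaleR_diff_left sum_subtractf)
    then have "B (\<alpha> k) y - c k = 0"
      by (rule independent_image_sum_eq_0[OF ind inj fin _ that(2)])
    then show ?thesis by simp
  qed
  have "inj_on g (span ?V)"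
    unfolding span_span
  proof (rule linear_inj_on_iff_eq_0[OF lg subspace_span, THEN iffD2], intro ballI impI)
    fix y assume "y \<in> ?V" "g y = 0"
    then show "y = 0"
      using nondeg g_coeffs[of y "\<lambda>_. 0"] by simp
  qed
  then have "dim (g ` ?V) = dim ?V"
    by (rule dim_image_eq[OF lg])
  moreover have "g y \<in> ?V" for y
    unfolding g_def by (intro span_sum span_scale span_base) auto
  ultimately have "g ` ?V = ?V"
    by (intro subspace_dim_equal linear_subspace_image[OF lg] subspace_span) auto
  moreover have "\<alpha> j \<in> ?V" using j by (intro span_base) auto
  ultimately have "\<alpha> j \<in> g ` ?V" by simp
  then obtain y where y: "\<alpha> j = g y" "y \<in> ?V" by (rule imageE)
  have "(\<Sum>k\<in>I. (if k = j then 1 else 0) *\<^sub>R \<alpha> k) = (\<Sum>k\<in>I. if k = j then \<alpha> k else 0)"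
    by (rule sum.cong) auto
  also have "\<dots> = g y"
    using fin j y(1) by simp
  finally have gy: "g y = (\<Sum>k\<in>I. (if k = j then 1 else 0) *\<^sub>R \<alpha> k)" ..
  have dual: "\<forall>k\<in>I. B (\<alpha> k) y = (if k = j then 1 else 0)"
    using g_coeffs[OF gy] by blast
  have "z = y" if "z \<in> ?V" "\<forall>k\<in>I. B (\<alpha> k) z = (if k = j then 1 else 0)" for z
    using nondeg[of "z - y"] that y(2) dual by (simp add: span_diff linear_diff[OF lin])
  with y(2) dual show ?thesis by blast
qed

lemma affine_type_mat_vec_eq_0:
  assumes aff: "affine_type n A" and v: "\<forall>k\<in>{1..n}. mat_vec n A v k = 0" and i: "i \<le> n"
  shows "mat_vec n A v i = 0"
proof -
  have Aff: "\<And>w. \<forall>i\<le>n. mat_vec n A w i \<ge> 0 \<Longrightarrow> \<forall>i\<le>n. mat_vec n A w i = 0"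
    using aff unfolding affine_type_def by blast
  have neg: "mat_vec n A (\<lambda>j. - v j) k = - mat_vec n A v k" for k
    by (simp add: mat_vec_def sum_negf)
  have other: "mat_vec n A v k = 0" if "0 < k" "k \<le> n" for k
    using v that by auto
  show ?thesis
  proof (cases "mat_vec n A v 0 \<ge> 0")
    case True
    then have "\<forall>i\<le>n. mat_vec n A v i \<ge> 0"
      using other by (metis order_refl not_gr0)
    then show ?thesis using Aff i by blast
  next
    case False
    then have "\<forall>i\<le>n. mat_vec n A (\<lambda>j. - v j) i \<ge> 0"
      unfolding neg using other by (metis neg_0_le_iff_le nle_le not_gr0 order_refl)
    then show ?thesis using Aff[of "\<lambda>j. - v j"] i unfolding neg by simp
  qed
qed

text \<open>The kernel of an affine matrix is spanned by a vector without zero entries.\<close>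

lemma affine_type_kernel_eq_0:
  assumes aff: "affine_type n A" and v0: "v 0 = 0"
    and v: "\<forall>k\<in>{1..n}. mat_vec n A v k = 0" and i: "i \<le> n"
  shows "v i = 0"
proof -
  obtain u where ker: "\<And>w. \<forall>i\<le>n. mat_vec n A w i = 0 \<Longrightarrow> \<exists>t. \<forall>i\<le>n. w i = t * u i"
    using aff unfolding affine_type_def by blast
  obtain p where p_pos: "\<forall>i\<le>n. p i > 0" and p_ker: "\<forall>i\<le>n. mat_vec n A p i = 0"
    using aff unfolding affine_type_def by blast
  obtain t where t: "\<forall>i\<le>n. v i = t * u i"
    using ker affine_type_mat_vec_eq_0[OF aff v] by blast
  obtain s where "\<forall>i\<le>n. p i = s * u i" using ker p_ker by blast
  then have "u 0 \<noteq> 0" using p_pos by (metis le0 less_irrefl mult_zero_right)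
  then have "t = 0" using t v0 by simp
  then show ?thesis using t i by simp
qed

lemma std_inv_form_nondegenerate_on_span:
  fixes \<alpha> :: "nat \<Rightarrow> 'v::euclidean_space"
  assumes aff: "affine_type n A" and re: "realization n A \<alpha> \<alpha>v"
    and pa: "prim_kernel_vec n A a" and pav: "prim_kernel_vec n (\<lambda>i j. A j i) av"
    and sf: "std_inv_form n \<alpha> \<alpha>v a av B"
    and y: "y \<in> span (\<alpha> ` {1..n})" and orth: "\<forall>k\<in>{1..n}. B (\<alpha> k) y = 0"
  shows "y = 0"
proof -
  have inj: "inj_on \<alpha> {1..n}"
    using re by (auto simp: realization_def intro: inj_on_subset)
  obtain c where c: "y = (\<Sum>i\<in>{1..n}. c i *\<^sub>R \<alpha> i)"
    using span_image_sumE[OF finite_atLeastAtMost inj y] .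
  define v where "v i = (if i = 0 then 0 else c i)" for i
  have "mat_vec n A v k = 0" if k: "k \<in> {1..n}" for k
  proof -
    have "{..n} = insert 0 {1..n}" by auto
    then have "mat_vec n A v k = (\<Sum>i\<in>{1..n}. c i * of_int (A k i))"
      unfolding mat_vec_def by (simp add: v_def mult.commute)
    also have "\<dots> = \<alpha>v k y"
      using re k by (simp add: realization_def c linear_sum linear_scale)
    also have "\<dots> = 0"
    proof -
      have "a k > 0" "av k > 0"
        using pa pav k by (auto simp: prim_kernel_vec_def)
      moreover have "B y (\<alpha> k) = (of_int (av k) / of_int (a k)) * \<alpha>v k y"
        using sf k by (simp add: std_inv_form_def)
      moreover have "B y (\<alpha> k) = 0"
        using sf orth k by (simp add: std_inv_form_def)
      ultimately show ?thesis by simp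
    qed
    finally show ?thesis .
  qed
  moreover have "v 0 = 0" by (simp add: v_def)
  ultimately have "c i = 0" if "i \<in> {1..n}" for i
    using affine_type_kernel_eq_0[OF aff, of v i] that by (simp add: v_def)
  then show "y = 0"
    by (simp add: c)
qed

lemma omv_in_span:
  fixes \<alpha> :: "nat \<Rightarrow> 'v::euclidean_space"
  assumes aff: "affine_type n A" and re: "realization n A \<alpha> \<alpha>v"
    and pa: "prim_kernel_vec n A a" and pav: "prim_kernel_vec n (\<lambda>i j. A j i) av"
    and sf: "std_inv_form n \<alpha> \<alpha>v a av B" and j: "j \<in> {1..n}"
  shows "omv n \<alpha> B j \<in> span (\<alpha> ` {1..n})"
proof -
  have inj: "inj_on \<alpha> {1..n}"
    using re by (auto simp: realization_def intro: inj_on_subset)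
  have "independent (\<alpha> ` {0..n})"
    using re by (simp add: realization_def)
  then have ind: "independent (\<alpha> ` {1..n})"
    by (rule independent_mono) auto
  have lin: "\<And>u. linear (B u)"
    using sf by (simp add: std_inv_form_def bilinear_def)
  have "\<exists>!y. y \<in> span (\<alpha> ` {1..n}) \<and> (\<forall>k\<in>{1..n}. B (\<alpha> k) y = (if k = j then 1 else 0))"
    using dual_vector_exists_unique[of "{1..n}" \<alpha> B, OF finite_atLeastAtMost inj ind lin _ j]
      std_inv_form_nondegenerate_on_span[OF aff re pa pav sf] by blast
  then show ?thesis
    unfolding omv_def by (rule theI'[THEN conjunct1])
qed

lemma coweight_lattice_subset_span:
  fixes \<alpha> :: "nat \<Rightarrow> 'v::euclidean_space"
  assumes "affine_type n A" "realization n A \<alpha> \<alpha>v"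
    and "prim_kernel_vec n A a" "prim_kernel_vec n (\<lambda>i j. A j i) av"
    and "std_inv_form n \<alpha> \<alpha>v a av B"
  shows "coweight_lattice n \<alpha> B \<subseteq> span (\<alpha> ` {1..n})"
  unfolding coweight_lattice_def
  using omv_in_span[OF assms] by (auto intro!: span_sum span_scale)

lemma ht_eq_height_functional:
  fixes \<alpha> :: "nat \<Rightarrow> 'v::real_vector"
  assumes inj: "inj_on \<alpha> {1..n}" and lin: "linear \<rho>" and \<rho>: "\<forall>i\<in>{1..n}. \<rho> (\<alpha> i) = 1"
    and x: "x \<in> span (\<alpha> ` {1..n})"
  shows "ht n \<alpha> x = \<rho> x"
proof -
  have sum_coeffs: "\<rho> (\<Sum>i\<in>{1..n}. c i *\<^sub>R \<alpha> i) = (\<Sum>i\<in>{1..n}. c i)" for c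
    using lin \<rho> by (simp add: linear_sum linear_scale)
  obtain c where c: "x = (\<Sum>i\<in>{1..n}. c i *\<^sub>R \<alpha> i)"
    using span_image_sumE[OF finite_atLeastAtMost inj x] .
  show ?thesis
    unfolding ht_def
  proof (rule the_equality)
    show "\<exists>c. x = (\<Sum>i\<in>{1..n}. c i *\<^sub>R \<alpha> i) \<and> \<rho> x = (\<Sum>i\<in>{1..n}. c i)"
      using c sum_coeffs by blast
    show "s = \<rho> x" if "\<exists>c. x = (\<Sum>i\<in>{1..n}. c i *\<^sub>R \<alpha> i) \<and> s = (\<Sum>i\<in>{1..n}. c i)" for s
      using that sum_coeffs by auto
  qed
qed

lemma gen_grp_fixes:
  assumes "g \<in> gen_grp \<alpha> \<alpha>v S" and "\<forall>i\<in>S. \<alpha>v i \<mu> = 0"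
  shows "g \<mu> = \<mu>"
proof -
  obtain ws where "g = wprod \<alpha> \<alpha>v ws" "set ws \<subseteq> S"
    using assms(1) by (auto simp: gen_grp_def)
  moreover have "wprod \<alpha> \<alpha>v ws \<mu> = \<mu>" if "set ws \<subseteq> S" for ws
    using that assms(2) by (induction ws) (auto simp: wprod_def srefl_def)
  ultimately show ?thesis by simp
qed

lemma std_inv_form_orthogonal_span:
  assumes sf: "std_inv_form n \<alpha> \<alpha>v a av B"
    and \<mu>: "\<forall>i\<in>{1..n}. \<alpha>v i \<mu> = 0" and x: "x \<in> span (\<alpha> ` {1..n})"
  shows "B \<mu> x = 0"
proof (rule linear_eq_0_on_span[OF _ _ x])
  show "linear (B \<mu>)"
    using sf by (simp add: std_inv_form_def bilinear_def)
  show "B \<mu> y = 0" if "y \<in> \<alpha> ` {1..n}" for y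
    using that sf \<mu> by (auto simp: std_inv_form_def)
qed

lemma cfun_eq_1:
  assumes "\<forall>i\<le>n. \<alpha>v i \<Lambda>0 = (if i = 0 then 1 else 0)" and "av 0 = 1"
  shows "cfun n av \<alpha>v \<Lambda>0 = 1"
proof -
  have "cfun n av \<alpha>v \<Lambda>0 = (\<Sum>i\<le>n. if i = 0 then of_int (av i) else 0)"
    unfolding cfun_def by (rule sum.cong) (use assms(1) in auto)
  then show ?thesis
    using assms(2) by simp
qed

lemma LL0_transl:
  assumes lin: "linear \<rho>v" and \<rho>v: "\<forall>i\<le>n. \<rho>v (\<alpha> i) = 1"
    and level: "cfun n av \<alpha>v \<Lambda>0 = 1" and orth: "B \<Lambda>0 x = 0"
  shows "LL0 \<Lambda>0 \<rho>v (transl n a av \<alpha> \<alpha>v B x) = of_int (coxnum n a) / 2 * B x x - \<rho>v x"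
proof -
  have "\<rho>v (delta n a \<alpha>) = of_int (coxnum n a)"
    unfolding delta_def coxnum_def using lin \<rho>v by (simp add: linear_sum linear_scale)
  then show ?thesis
    unfolding LL0_def transl_def level orth
    using lin by (simp add: linear_diff linear_add linear_scale)
qed

lemma LL0_comp_stabilizer:
  "u \<Lambda>0 = \<Lambda>0 \<Longrightarrow> LL0 \<Lambda>0 \<rho>v (g \<circ> u) = LL0 \<Lambda>0 \<rho>v g"
  by (simp add: LL0_def)

theorem proposition2p6:
  fixes n :: nat and A :: "nat \<Rightarrow> nat \<Rightarrow> int"
    and \<alpha> :: "nat \<Rightarrow> 'v::euclidean_space" and \<alpha>v :: "nat \<Rightarrow> 'v \<Rightarrow> real"
    and a av :: "nat \<Rightarrow> int" and B :: "'v \<Rightarrow> 'v \<Rightarrow> real"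
    and \<Lambda>0 :: 'v and \<rho>v :: "'v \<Rightarrow> real"
    and x :: 'v and wb w :: "'v \<Rightarrow> 'v"
  assumes "affine_type n A"
    and "realization n A \<alpha> \<alpha>v"
    and "prim_kernel_vec n A a"
    and "prim_kernel_vec n (\<lambda>i j. A j i) av"
    and "av 0 = 1"
    and "std_inv_form n \<alpha> \<alpha>v a av B"
    and "\<forall>i\<le>n. \<alpha>v i \<Lambda>0 = (if i = 0 then 1 else 0)"
    and "linear \<rho>v" and "\<forall>i\<le>n. \<rho>v (\<alpha> i) = 1"
    and "x \<in> coweight_lattice n \<alpha> B"
    and "wb \<in> gen_grp \<alpha> \<alpha>v {1..n}"
    and "w = transl n a av \<alpha> \<alpha>v B x \<circ> wb"
  shows "LL0 \<Lambda>0 \<rho>v w = of_int (coxnum n a) / 2 * B x x - ht n \<alpha> x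
    \<and> LL0 \<Lambda>0 \<rho>v w = LL0 \<Lambda>0 \<rho>v (transl n a av \<alpha> \<alpha>v B x)
    \<and> (\<forall>\<sigma> v v0. \<sigma> \<in> Sigma_set n a av \<alpha> \<alpha>v B \<longrightarrow> v \<in> gen_grp \<alpha> \<alpha>v {0..n} \<longrightarrow> w = \<sigma> \<circ> v \<longrightarrow>
          v0 \<in> (\<lambda>u. v \<circ> u) ` gen_grp \<alpha> \<alpha>v {1..n} \<longrightarrow>
          (\<forall>u\<in>(\<lambda>u. v \<circ> u) ` gen_grp \<alpha> \<alpha>v {1..n}. wlen \<alpha> \<alpha>v {0..n} v0 \<le> wlen \<alpha> \<alpha>v {0..n} u) \<longrightarrow>
          LL0 \<Lambda>0 \<rho>v (\<sigma> \<circ> v) = LL0 \<Lambda>0 \<rho>v (\<sigma> \<circ> v0))"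
proof -
  have V0: "x \<in> span (\<alpha> ` {1..n})"
    using coweight_lattice_subset_span[OF assms(1-4,6)] assms(10) by blast
  have inj: "inj_on \<alpha> {1..n}"
    using assms(2) by (auto simp: realization_def intro: inj_on_subset)
  have W0_fixes: "u \<Lambda>0 = \<Lambda>0" if "u \<in> gen_grp \<alpha> \<alpha>v {1..n}" for u
    using gen_grp_fixes[OF that] assms(7) by simp
  have "B \<Lambda>0 x = 0"
    using std_inv_form_orthogonal_span[OF assms(6) _ V0] assms(7) by simp
  then have transl: "LL0 \<Lambda>0 \<rho>v (transl n a av \<alpha> \<alpha>v B x) = of_int (coxnum n a) / 2 * B x x - ht n \<alpha> x"
    using LL0_transl[OF assms(8,9) cfun_eq_1[of n \<alpha>v \<Lambda>0 av, OF assms(7,5)]]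
      ht_eq_height_functional[OF inj assms(8) _ V0] assms(9) by simp
  have w: "LL0 \<Lambda>0 \<rho>v w = LL0 \<Lambda>0 \<rho>v (transl n a av \<alpha> \<alpha>v B x)"
    using assms(11,12) W0_fixes LL0_comp_stabilizer by blast
  have coset: "LL0 \<Lambda>0 \<rho>v (\<sigma> \<circ> v) = LL0 \<Lambda>0 \<rho>v (\<sigma> \<circ> v0)"
    if "v0 \<in> (\<lambda>u. v \<circ> u) ` gen_grp \<alpha> \<alpha>v {1..n}" for \<sigma> v v0
    using that W0_fixes LL0_comp_stabilizer[of _ \<Lambda>0 \<rho>v "\<sigma> \<circ> v"]
    by (auto simp: comp_assoc)
  show ?thesis
    using coset by (simp only: transl w) blast
qed

end
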